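(* (Working in $\mathbf{ZF}$.) Let $X$ be a weakly normal generalized topological space such that $X_{top}$ is locally compact and not compact, and let $\hat X$ be the Alexandroff strict compactification of $X$. Then the operator $\mathrm{Ex}_{\hat X}$ is finitely additive if and only if, for every pair $A,B$ of disjoint members of $\mathrm{Cl}_X$, at least one of the sets $A,B$ is topologically compact.
   Context: A generalized topological space (gts) $(X,\mathrm{Op}_X,\mathrm{Cov}_X)$ is in the sense of Delfs–Knebusch ($\mathrm{Op}_X$ contains $\emptyset,X$ and is closed under finite unions and intersections; $\mathrm{Cov}_X$ a collection of families of open sets satisfying the Delfs–Knebusch axioms). $\mathrm{Cl}_X$ = complements of open sets; $X_{top}$ = $X$ with topology generated by $\mathrm{Op}_X$; a subset is topologically compact if it is compact as a subspace of $X_{top}$. $X$ is weakly normal if any two disjoint sets, each a singleton or in $\mathrm{Cl}_X$, lie in disjoint open sets. $\mathrm{Kc}_X$ is the set of topologically compact members of $\mathrm{Cl}_X$. For $\infty\notin X$, the Alexandroff strict compactification is $\hat X=X\cup\{\infty\}$ with $\mathrm{Op}_{\hat X}=\mathrm{Op}_X\cup\{\hat X\setminus C:C\in\mathrm{Kc}_X\}$ and $\mathrm{Cov}_{\hat X}=\{\mathcal U\subseteq\mathrm{Op}_{\hat X}:\{U\cap X:U\in\mathcal U\}\in\mathrm{Cov}_X\}$; $\hat X_{top}$ is $\hat X$ with the topology generated by $\mathrm{Op}_{\hat X}$, a compactification of $X_{top}$. For $U\in\mathrm{Op}_X$, $\mathrm{Ex}_{\hat X}(U)=\hat X\setminus\mathrm{cl}_{\hat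 X_{top}}(X\setminus U)$; $\mathrm{Ex}_{\hat X}$ is finitely additive if $\{\mathrm{Ex}_{\hat X}(U):U\in\mathrm{Op}_X\}$ is stable under finite unions. *)

theory Defs
  imports "HOL-Analysis.Analysis"
begin

text \<open>Generalized topological spaces in the sense of Delfs--Knebusch
  (axioms as listed e.g. by Piekosz--Wajch).\<close>

definition is_gts :: "'a set \<Rightarrow> 'a set set \<Rightarrow> 'a set set set \<Rightarrow> bool" where
  "is_gts X Op Cov \<longleftrightarrow>
     Op \<subseteq> Pow X \<and>
     {} \<in> Op \<and> X \<in> Op \<and>
     (\<forall>U\<in>Op. \<forall>V\<in>Op. U \<union> V \<in> Op \<and> U \<inter> V \<in> Op) \<and>
     (\<forall>\<U>\<in>Cov. \<U> \<subseteq> Op \<and> \<Union>\<U> \<in> Op) \<and>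
     (\<forall>\<U>. \<U> \<subseteq> Op \<and> finite \<U> \<longrightarrow> \<U> \<in> Cov) \<and>
     (\<forall>\<U>\<in>Cov. \<forall>V\<in>Op. (\<lambda>U. U \<inter> V) ` \<U> \<in> Cov) \<and>
     (\<forall>\<U>\<in>Cov. \<forall>\<V>. (\<forall>U\<in>\<U>. \<V> U \<in> Cov \<and> \<Union>(\<V> U) = U)
          \<longrightarrow> (\<Union>U\<in>\<U>. \<V> U) \<in> Cov) \<and>
     (\<forall>\<U>\<in>Cov. \<forall>\<V>. \<V> \<subseteq> Op \<and> \<Union>\<V> = \<Union>\<U> \<and> (\<forall>U\<in>\<U>. \<exists>V\<in>\<V>. U \<subseteq> V)
          \<longrightarrow> \<V> \<in> Cov) \<and>
     (\<forall>\<U>. \<forall>\<V>\<in>Cov. \<U> \<subseteq> Op \<and> \<Union>\<U> = \<Union>\<V> \<and>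
          (\<forall>V\<in>\<V>. (\<lambda>U. V \<inter> U) ` \<U> \<in> Cov) \<longrightarrow> \<U> \<in> Cov)"

definition gts_Cl :: "'a set \<Rightarrow> 'a set set \<Rightarrow> 'a set set" where
  "gts_Cl X Op = {X - U | U. U \<in> Op}"

definition gts_top :: "'a set set \<Rightarrow> 'a topology" where
  "gts_top Op = topology_generated_by Op"

definition weakly_normal :: "'a set \<Rightarrow> 'a set set \<Rightarrow> bool" where
  "weakly_normal X Op \<longleftrightarrow>
     (\<forall>A B. (A \<in> gts_Cl X Op \<or> (\<exists>x\<in>X. A = {x})) \<and>
            (B \<in> gts_Cl X Op \<or> (\<exists>x\<in>X. B = {x})) \<and> A \<inter> B = {}
        \<longrightarrow> (\<exists>U\<in>Op. \<exists>V\<in>Op. A \<subseteq> U \<and> B \<subseteq> V \<and> U \<inter> V = {}))"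

definition gts_Kc :: "'a set \<Rightarrow> 'a set set \<Rightarrow> 'a set set" where
  "gts_Kc X Op = {C \<in> gts_Cl X Op. compactin (gts_top Op) C}"

definition alex_Op :: "'a set \<Rightarrow> 'a set set \<Rightarrow> 'a \<Rightarrow> 'a set set" where
  "alex_Op X Op pinf = Op \<union> {insert pinf X - C | C. C \<in> gts_Kc X Op}"

definition alex_Cov :: "'a set \<Rightarrow> 'a set set \<Rightarrow> 'a set set set \<Rightarrow> 'a \<Rightarrow> 'a set set set" where
  "alex_Cov X Op Cov pinf =
     {\<U>. \<U> \<subseteq> alex_Op X Op pinf \<and> (\<lambda>U. U \<inter> X) ` \<U> \<in> Cov}"

definition alex_Ex :: "'a set \<Rightarrow> 'a set set \<Rightarrow> 'a \<Rightarrow> 'a set \<Rightarrow> 'a set" where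
  "alex_Ex X Op pinf U =
     insert pinf X - (gts_top (alex_Op X Op pinf)) closure_of (X - U)"

definition alex_Ex_finitely_additive :: "'a set \<Rightarrow> 'a set set \<Rightarrow> 'a \<Rightarrow> bool" where
  "alex_Ex_finitely_additive X Op pinf \<longleftrightarrow>
     (\<forall>F. finite F \<and> F \<subseteq> alex_Ex X Op pinf ` Op \<longrightarrow> \<Union>F \<in> alex_Ex X Op pinf ` Op)"

end

theory Submission
  imports Defs
begin

text \<open>As \<open>X\<close> is open in \<open>\<hat>X\<close>, the operator \<open>Ex\<close> can add to an open set \<open>U\<close> only the
  point \<open>\<infinity>\<close>, and it adds it exactly when \<open>X - U\<close> is compact.  So \<open>Ex(U) \<union> Ex(V)\<close>
  is a value of \<open>Ex\<close> iff it equals \<open>Ex(U \<union> V)\<close>, i.e. iff \<open>(X - U) \<inter> (X - V)\<close> is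
  compact only when \<open>X - U\<close> or \<open>X - V\<close> is.  For disjoint non-compact closed sets this
  fails, since \<open>Ex(W) = X\<close> is impossible.  Conversely, if non-compact closed sets
  \<open>A\<close>, \<open>B\<close> had compact intersection, local compactness gives an open \<open>W \<supseteq> A \<inter> B\<close>
  inside a compact set, and \<open>A - W\<close>, \<open>B - W\<close> would be disjoint non-compact closed sets.\<close>

lemma generate_topology_on_local_base:
  assumes "generate_topology_on \<B> S"
    and Int_closed: "\<And>a b. a \<in> \<B> \<Longrightarrow> b \<in> \<B> \<Longrightarrow> a \<inter> b \<in> \<B>"
    and "x \<in> S"
  shows "\<exists>b\<in>\<B>. x \<in> b \<and> b \<subseteq> S"
  using assms(1,3)
proof (induction arbitrary: x rule: generate_topology_on.induct)
  case (Int a b)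
  then obtain p q where "p \<in> \<B>" "x \<in> p" "p \<subseteq> a" "q \<in> \<B>" "x \<in> q" "q \<subseteq> b"
    by (meson IntD1 IntD2)
  then show ?case using Int_closed[of p q] by blast
next
  case (UN K)
  then obtain k where "k \<in> K" "x \<in> k" by blast
  with UN.IH obtain p where "p \<in> \<B>" "x \<in> p" "p \<subseteq> k" by meson
  then show ?case using \<open>k \<in> K\<close> by blast
qed auto

lemma openin_topology_generated_by_local_base:
  assumes "openin (topology_generated_by \<B>) S"
    and "\<And>a b. a \<in> \<B> \<Longrightarrow> b \<in> \<B> \<Longrightarrow> a \<inter> b \<in> \<B>"
    and "x \<in> S"
  shows "\<exists>b\<in>\<B>. x \<in> b \<and> b \<subseteq> S"
  using generate_topology_on_local_base openin_topology_generated_by assms by metis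

lemma in_Diff_closure_of_iff:
  assumes "topspace T = A"
  shows "y \<in> A - T closure_of B \<longleftrightarrow> y \<in> A \<and> (\<exists>S. y \<in> S \<and> openin T S \<and> S \<inter> B = {})"
  unfolding in_closure_of Diff_iff assms by blast

locale open_lattice =
  fixes X :: "'a set" and Op :: "'a set set"
  assumes Op_subset: "Op \<subseteq> Pow X"
    and empty_Op: "{} \<in> Op"
    and space_Op: "X \<in> Op"
    and Un_Op: "\<And>U V. U \<in> Op \<Longrightarrow> V \<in> Op \<Longrightarrow> U \<union> V \<in> Op"
    and Int_Op: "\<And>U V. U \<in> Op \<Longrightarrow> V \<in> Op \<Longrightarrow> U \<inter> V \<in> Op"

lemma is_gts_open_lattice: "is_gts X Op Cov \<Longrightarrow> open_lattice X Op"
  unfolding is_gts_def open_lattice_def by (elim conjE) (intro conjI; blast)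

context open_lattice
begin

lemma Op_subset_space: "U \<in> Op \<Longrightarrow> U \<subseteq> X"
  using Op_subset by blast

lemma topspace_gts_top: "topspace (gts_top Op) = X"
  unfolding gts_top_def using Op_subset space_Op by auto

lemma openin_gts_top: "U \<in> Op \<Longrightarrow> openin (gts_top Op) U"
  unfolding gts_top_def by (rule topology_generated_by_Basis)

lemma closedin_gts_top: "U \<in> Op \<Longrightarrow> closedin (gts_top Op) (X - U)"
  using closedin_diff[OF closedin_topspace openin_gts_top] topspace_gts_top by metis

lemma gts_top_local_base:
  "openin (gts_top Op) S \<Longrightarrow> x \<in> S \<Longrightarrow> \<exists>b\<in>Op. x \<in> b \<and> b \<subseteq> S"
  unfolding gts_top_def by (rule openin_topology_generated_by_local_base[OF _ Int_Op])

lemma gts_Cl_iff: "A \<in> gts_Cl X Op \<longleftrightarrow> (\<exists>U\<in>Op. A = X - U)"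
  unfolding gts_Cl_def by blast

lemma gts_Kc_iff: "C \<in> gts_Kc X Op \<longleftrightarrow> (\<exists>U\<in>Op. C = X - U) \<and> compactin (gts_top Op) C"
  by (simp add: gts_Kc_def gts_Cl_iff)

lemma empty_gts_Kc: "{} \<in> gts_Kc X Op"
  unfolding gts_Kc_iff using space_Op by (metis Diff_cancel compactin_empty)

lemma Un_gts_Kc:
  assumes "C \<in> gts_Kc X Op" "D \<in> gts_Kc X Op"
  shows "C \<union> D \<in> gts_Kc X Op"
proof -
  obtain U V where "U \<in> Op" "V \<in> Op" "C = X - U" "D = X - V"
    using assms unfolding gts_Kc_iff by blast
  then have "U \<inter> V \<in> Op" "C \<union> D = X - (U \<inter> V)"
    using Int_Op by auto
  moreover have "compactin (gts_top Op) (C \<union> D)"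
    using assms compactin_Un unfolding gts_Kc_iff by blast
  ultimately show ?thesis
    unfolding gts_Kc_iff by blast
qed

lemma Diff_gts_Kc: "U \<in> Op \<Longrightarrow> compactin (gts_top Op) (X - U) \<Longrightarrow> X - U \<in> gts_Kc X Op"
  unfolding gts_Kc_def gts_Cl_def by blast

lemma alex_Op_Diff_gts_Kc: "C \<in> gts_Kc X Op \<Longrightarrow> insert pinf X - C \<in> alex_Op X Op pinf"
  unfolding alex_Op_def by blast

lemma alex_Op_iff:
  "S \<in> alex_Op X Op pinf \<longleftrightarrow> S \<in> Op \<or> (\<exists>C\<in>gts_Kc X Op. S = insert pinf X - C)"
  by (auto simp: alex_Op_def)

lemma alex_Op_Int:
  assumes "pinf \<notin> X" "S \<in> alex_Op X Op pinf" "S' \<in> alex_Op X Op pinf"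
  shows "S \<inter> S' \<in> alex_Op X Op pinf"
proof -
  have mixed: "U \<inter> (insert pinf X - C) \<in> Op" if "U \<in> Op" "C \<in> gts_Kc X Op" for U C
  proof -
    obtain V where "V \<in> Op" "C = X - V"
      using \<open>C \<in> gts_Kc X Op\<close> gts_Kc_iff by blast
    then have "U \<inter> (insert pinf X - C) = U \<inter> V"
      using \<open>U \<in> Op\<close> Op_subset_space assms(1) by blast
    then show ?thesis
      using Int_Op \<open>U \<in> Op\<close> \<open>V \<in> Op\<close> by simp
  qed
  have both: "(insert pinf X - C) \<inter> (insert pinf X - D) = insert pinf X - (C \<union> D)" for C D
    by blast
  consider "S \<in> Op" | C where "C \<in> gts_Kc X Op" "S = insert pinf X - C"
    using assms(2) alex_Op_iff by blast
  moreover consider "S' \<in> Op" | D where "D \<in> gts_Kc X Op" "S' = insert pinf X - D"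
    using assms(3) alex_Op_iff by blast
  ultimately show ?thesis
    unfolding alex_Op_iff using Int_Op mixed both Un_gts_Kc
    by cases (metis inf_commute)+
qed

lemma topspace_alex_top: "topspace (gts_top (alex_Op X Op pinf)) = insert pinf X"
proof -
  have "insert pinf X \<in> alex_Op X Op pinf"
    unfolding alex_Op_iff using empty_gts_Kc by blast
  moreover have "\<forall>S\<in>alex_Op X Op pinf. S \<subseteq> insert pinf X"
    using Op_subset by (auto simp: alex_Op_iff)
  ultimately show ?thesis
    unfolding gts_top_def by auto
qed

lemma alex_Ex_eq:
  assumes "pinf \<notin> X" "U \<in> Op"
  shows "alex_Ex X Op pinf U = (if compactin (gts_top Op) (X - U) then insert pinf U else U)"
proof -
  let ?T = "gts_top (alex_Op X Op pinf)"
  have open_T: "openin ?T S" if "S \<in> alex_Op X Op pinf" for S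
    unfolding gts_top_def using that by (rule topology_generated_by_Basis)
  have Ex_iff: "y \<in> alex_Ex X Op pinf U \<longleftrightarrow>
      y \<in> insert pinf X \<and> (\<exists>S. y \<in> S \<and> openin ?T S \<and> S \<inter> (X - U) = {})" for y
    unfolding alex_Ex_def by (rule in_Diff_closure_of_iff[OF topspace_alex_top])
  have pinf_iff: "pinf \<in> alex_Ex X Op pinf U \<longleftrightarrow> compactin (gts_top Op) (X - U)"
  proof
    assume "pinf \<in> alex_Ex X Op pinf U"
    then obtain S where S: "pinf \<in> S" "openin ?T S" "S \<inter> (X - U) = {}"
      unfolding Ex_iff by blast
    then obtain b where b: "b \<in> alex_Op X Op pinf" "pinf \<in> b" "b \<subseteq> S"
      using openin_topology_generated_by_local_base[OF _ alex_Op_Int[OF assms(1)]]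
      unfolding gts_top_def by blast
    then have "b \<notin> Op"
      using Op_subset_space assms(1) by blast
    then obtain C where C: "C \<in> gts_Kc X Op" "b = insert pinf X - C"
      using b(1) unfolding alex_Op_iff by blast
    then have "X - U \<subseteq> C"
      using b(3) S(3) by blast
    moreover have "compactin (gts_top Op) C"
      using C(1) unfolding gts_Kc_def by blast
    ultimately show "compactin (gts_top Op) (X - U)"
      using closed_compactin closedin_gts_top[OF assms(2)] by blast
  next
    assume "compactin (gts_top Op) (X - U)"
    then have "openin ?T (insert pinf X - (X - U))"
      using open_T Diff_gts_Kc alex_Op_Diff_gts_Kc assms(2) by blast
    moreover have "(insert pinf X - (X - U)) \<inter> (X - U) = {}" "pinf \<in> insert pinf X - (X - U)"
      using assms(1) by auto
    ultimately show "pinf \<in> alex_Ex X Op pinf U"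
      unfolding Ex_iff by (intro conjI insertI1 exI)
  qed
  have "openin ?T U"
    using open_T assms(2) unfolding alex_Op_iff by blast
  then have X_iff: "y \<in> alex_Ex X Op pinf U \<longleftrightarrow> y \<in> U" if "y \<in> X" for y
    using that unfolding Ex_iff by blast
  have "alex_Ex X Op pinf U \<subseteq> insert pinf X"
    unfolding alex_Ex_def by blast
  with pinf_iff X_iff show ?thesis
    using Op_subset_space[OF assms(2)] assms(1) by (auto split: if_splits)
qed

lemma compactin_open_neighbourhood:
  assumes "locally_compact_space (gts_top Op)" "compactin (gts_top Op) K"
  shows "\<exists>W\<in>Op. \<exists>C. compactin (gts_top Op) C \<and> K \<subseteq> W \<and> W \<subseteq> C"
proof -
  define \<U> where "\<U> = {Q \<in> Op. \<exists>C. compactin (gts_top Op) C \<and> Q \<subseteq> C}"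
  have "K \<subseteq> \<Union>\<U>"
  proof
    fix x assume "x \<in> K"
    then have "x \<in> topspace (gts_top Op)"
      using assms(2) compactin_subset_topspace by blast
    then obtain V C where "openin (gts_top Op) V" "compactin (gts_top Op) C" "x \<in> V" "V \<subseteq> C"
      using assms(1) unfolding locally_compact_space_def by blast
    moreover obtain b where "b \<in> Op" "x \<in> b" "b \<subseteq> V"
      using gts_top_local_base[OF calculation(1,3)] by blast
    ultimately show "x \<in> \<Union>\<U>"
      unfolding \<U>_def by blast
  qed
  moreover have "\<forall>Q\<in>\<U>. openin (gts_top Op) Q"
    unfolding \<U>_def using openin_gts_top by blast
  ultimately obtain \<F> where \<F>: "finite \<F>" "\<F> \<subseteq> \<U>" "K \<subseteq> \<Union>\<F>"
    using assms(2) unfolding compactin_def by meson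
  have "\<forall>Q\<in>\<F>. \<exists>C. compactin (gts_top Op) C \<and> Q \<subseteq> C"
    using \<F>(2) unfolding \<U>_def by blast
  then obtain c where c: "\<And>Q. Q \<in> \<F> \<Longrightarrow> compactin (gts_top Op) (c Q) \<and> Q \<subseteq> c Q"
    by metis
  have "\<Union>\<F> \<in> Op"
    using \<F>(1,2) unfolding \<U>_def by (induction rule: finite_induct) (auto intro: empty_Op Un_Op)
  moreover have "compactin (gts_top Op) (\<Union>(c ` \<F>))"
    using compactin_Union \<F>(1) c by blast
  moreover have "\<Union>\<F> \<subseteq> \<Union>(c ` \<F>)"
    using c by blast
  ultimately show ?thesis
    using \<F>(3) by blast
qed

lemma noncompact_Int_noncompact:
  assumes lc: "locally_compact_space (gts_top Op)"
    and disjoint_compact: "\<forall>A\<in>gts_Cl X Op. \<forall>B\<in>gts_Cl X Op. A \<inter> B = {} \<longrightarrow>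
          compactin (gts_top Op) A \<or> compactin (gts_top Op) B"
    and "U \<in> Op" "V \<in> Op"
    and "\<not> compactin (gts_top Op) (X - U)" "\<not> compactin (gts_top Op) (X - V)"
  shows "\<not> compactin (gts_top Op) ((X - U) \<inter> (X - V))"
proof
  assume "compactin (gts_top Op) ((X - U) \<inter> (X - V))"
  then obtain W C where W: "W \<in> Op" "compactin (gts_top Op) C" "(X - U) \<inter> (X - V) \<subseteq> W" "W \<subseteq> C"
    using compactin_open_neighbourhood[OF lc] by blast
  have "X - U - W = X - (U \<union> W)" "X - V - W = X - (V \<union> W)"
    by auto
  then have "X - U - W \<in> gts_Cl X Op" "X - V - W \<in> gts_Cl X Op"
    using Un_Op W(1) \<open>U \<in> Op\<close> \<open>V \<in> Op\<close> gts_Cl_iff by metis+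
  moreover have "(X - U - W) \<inter> (X - V - W) = {}"
    using W(3) by blast
  ultimately have "compactin (gts_top Op) (X - U - W) \<or> compactin (gts_top Op) (X - V - W)"
    using disjoint_compact by blast
  moreover have "X - U = (X - U - W) \<union> ((X - U) \<inter> C)" "X - V = (X - V - W) \<union> ((X - V) \<inter> C)"
    using W(4) by blast+
  moreover have "compactin (gts_top Op) ((X - U) \<inter> C)" "compactin (gts_top Op) ((X - V) \<inter> C)"
    using closed_Int_compactin closedin_gts_top W(2) \<open>U \<in> Op\<close> \<open>V \<in> Op\<close> by blast+
  ultimately show False
    using assms(5,6) compactin_Un by metis
qed

lemma alex_Ex_finitely_additive_imp_disjoint_compact:
  assumes "pinf \<notin> X" "alex_Ex_finitely_additive X Op pinf"
    and "A \<in> gts_Cl X Op" "B \<in> gts_Cl X Op" "A \<inter> B = {}"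
  shows "compactin (gts_top Op) A \<or> compactin (gts_top Op) B"
proof (rule ccontr)
  assume noncompact: "\<not> (compactin (gts_top Op) A \<or> compactin (gts_top Op) B)"
  obtain U V where UV: "U \<in> Op" "A = X - U" "V \<in> Op" "B = X - V"
    using assms(3,4) unfolding gts_Cl_iff by blast
  then have "alex_Ex X Op pinf U = U" "alex_Ex X Op pinf V = V"
    using alex_Ex_eq[OF assms(1)] noncompact by auto
  then have "{U, V} \<subseteq> alex_Ex X Op pinf ` Op"
    using UV(1,3) by (metis empty_subsetI image_eqI insert_subset)
  moreover have "finite {U, V}"
    by simp
  ultimately have "U \<union> V \<in> alex_Ex X Op pinf ` Op"
    using assms(2) unfolding alex_Ex_finitely_additive_def by (metis Union_insert Union_empty sup_bot_right)
  moreover have "U \<union> V = X"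
    using UV assms(5) Op_subset_space by blast
  ultimately obtain W where W: "W \<in> Op" "alex_Ex X Op pinf W = X"
    by auto
  show False
  proof (cases "compactin (gts_top Op) (X - W)")
    case True
    then have "pinf \<in> alex_Ex X Op pinf W"
      using alex_Ex_eq[OF assms(1) W(1)] by simp
    then show False
      using W(2) assms(1) by simp
  next
    case False
    then have "W = X"
      using alex_Ex_eq[OF assms(1) W(1)] W(2) by simp
    then show False
      using False by simp
  qed
qed

lemma disjoint_compact_imp_alex_Ex_Un:
  assumes "pinf \<notin> X" "locally_compact_space (gts_top Op)"
    and disjoint_compact: "\<forall>A\<in>gts_Cl X Op. \<forall>B\<in>gts_Cl X Op. A \<inter> B = {} \<longrightarrow>
          compactin (gts_top Op) A \<or> compactin (gts_top Op) B"
    and "U \<in> Op" "V \<in> Op"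
  shows "alex_Ex X Op pinf U \<union> alex_Ex X Op pinf V = alex_Ex X Op pinf (U \<union> V)"
proof -
  have complement_Un: "X - (U \<union> V) = (X - U) \<inter> (X - V)"
    by blast
  have "compactin (gts_top Op) (X - (U \<union> V)) \<longleftrightarrow>
      compactin (gts_top Op) (X - U) \<or> compactin (gts_top Op) (X - V)"
    unfolding complement_Un
    using closed_Int_compactin closedin_gts_top assms(4,5)
      noncompact_Int_noncompact[OF assms(2) disjoint_compact assms(4,5)]
    by (metis inf_commute)
  then show ?thesis
    using alex_Ex_eq[OF assms(1)] assms(4,5) Un_Op by auto
qed

lemma disjoint_compact_imp_alex_Ex_finitely_additive:
  assumes "pinf \<notin> X" "locally_compact_space (gts_top Op)" "\<not> compact_space (gts_top Op)"
    and disjoint_compact: "\<forall>A\<in>gts_Cl X Op. \<forall>B\<in>gts_Cl X Op. A \<inter> B = {} \<longrightarrow>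
          compactin (gts_top Op) A \<or> compactin (gts_top Op) B"
  shows "alex_Ex_finitely_additive X Op pinf"
  unfolding alex_Ex_finitely_additive_def
proof (intro allI impI, elim conjE)
  fix F assume "finite F" "F \<subseteq> alex_Ex X Op pinf ` Op"
  then show "\<Union>F \<in> alex_Ex X Op pinf ` Op"
  proof (induction rule: finite_induct)
    case empty
    have "alex_Ex X Op pinf {} = {}"
      using alex_Ex_eq[OF assms(1) empty_Op] assms(3) topspace_gts_top
      unfolding compact_space_def by simp
    then show ?case
      using empty_Op by force
  next
    case (insert E F)
    then obtain U V where "U \<in> Op" "E = alex_Ex X Op pinf U" "V \<in> Op" "\<Union>F = alex_Ex X Op pinf V"
      by auto
    then show ?case
      using disjoint_compact_imp_alex_Ex_Un[OF assms(1,2) disjoint_compact] Un_Op by auto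
  qed
qed

end

theorem proposition7p12:
  fixes X :: "'a set" and Op :: "'a set set" and Cov :: "'a set set set" and pinf :: 'a
  assumes "is_gts X Op Cov"
    and "weakly_normal X Op"
    and "locally_compact_space (gts_top Op)"
    and "\<not> compact_space (gts_top Op)"
    and "pinf \<notin> X"
  shows "alex_Ex_finitely_additive X Op pinf \<longleftrightarrow>
         (\<forall>A\<in>gts_Cl X Op. \<forall>B\<in>gts_Cl X Op. A \<inter> B = {} \<longrightarrow>
             compactin (gts_top Op) A \<or> compactin (gts_top Op) B)"
proof -
  interpret open_lattice X Op
    using is_gts_open_lattice assms(1) .
  show ?thesis
    using alex_Ex_finitely_additive_imp_disjoint_compact[OF assms(5)]
      disjoint_compact_imp_alex_Ex_finitely_additive[OF assms(5,3,4)]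
    by blast
qed

end
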